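(* Let $\mathcal{S}$ be a communicating system, $\mathbf{l_{in}},\mathbf{l_{fin}}$ global states and $w\in\Sigma^*$. Then $w\in\mathcal{L}(\mathcal{A}_{SR}(\mathbf{l_{in}},\mathbf{l_{mid}},\mathbf{l_{fin}}))$ for some global state $\mathbf{l_{mid}}$ if and only if $\mathbf{l_{in}}\xrightarrow{msc(w)}\mathbf{l_{fin}}$.
   Context: Fix finite sets $\mathbb{M}$ of messages and $\mathbb{P}$ of processes; actions are sends $\mathrm{send}(p,q,m)$ and receives $\mathrm{rec}(p,q,m)$ (process $q$ receives $m$ from $p$). A system $\mathcal{S}$ is a family of finite automata, one per process, with transitions labelled by that process's sends and receives; its global automaton $(L_{\mathcal{S}},\delta_{\mathcal{S}},\mathbf{l_0})$ is the asynchronous product, with global states $L_{\mathcal{S}}=\prod_p L_p$, where a transition of process $q$ changes only the $q$-component. For an action sequence $e=a_1\cdots a_n$, write $\mathbf{l}\xRightarrow{e}\mathbf{l'}$ if $\mathbf{l}\xrightarrow{a_1}\cdots\xrightarrow{a_n}\mathbf{l'}$ in the global automaton (control states only, no buffers). An MSC is $(Ev,\lambda,\prec_{po},\prec_{src})$ with $\lambda$ labelling events by actions, $\prec_{po}$ totally ordering each process's events and $\prec_{src}$ matching some sends $\mathrm{send}(p,q,m)$ bijectively to all receives $\mathrm{rec}(p,q,m)$; a linearization is the action sequence of a total order extending $(\prec_{po}\cup\prec_{src})^*$. For an action sequence $e=a_1\cdots a_n$, $msc(e)$ has events $1..n$, $i\prec_{po}j$ iff $i<j$ and $a_i,a_j$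 belong to the same process, and $i\prec_{src}j$ iff $a_i=\mathrm{send}(p,q,m)$ and $a_j=\mathrm{rec}(p,q,m)$ are the $\ell$-th actions with these labels for some $\ell$, $i<j$. For an MSC $\mu$, $\mathbf{l}\xrightarrow{\mu}\mathbf{l'}$ means $\mathbf{l}\xRightarrow{e}\mathbf{l'}$ for any linearization $e$ of $\mu$. $\Sigma=\{!?,!\}\times\mathbb{M}\times\mathbb{P}^2$, symbols written $!?m^{p\to q}$, $!m^{p\to q}$. Substitutions $\sigma_1(!?m^{p\to q})=\sigma_1(!m^{p\to q})=\mathrm{send}(p,q,m)$, $\sigma_2(!?m^{p\to q})=\mathrm{rec}(p,q,m)$, $\sigma_2(!m^{p\to q})=\varepsilon$, and $msc(w)=msc(\sigma_1(w)\sigma_2(w))$. For global states $\mathbf{l_{in}},\mathbf{l_{mid}},\mathbf{l_{fin}}$, the automaton $\mathcal{A}_{SR}(\mathbf{l_{in}},\mathbf{l_{mid}},\mathbf{l_{fin}})$ over $\Sigma$ has states $L_{\mathcal{S}}\times L_{\mathcal{S}}$, initial state $(\mathbf{l_{in}},\mathbf{l_{mid}})$, single final state $(\mathbf{l_{mid}},\mathbf{l_{fin}})$, and for every global transition $(\mathbf{l_s},\mathrm{send}(p,q,m),\mathbf{l_s'})\in\delta_{\mathcal{S}}$: transitions $((\mathbf{l_s},\mathbf{l}),!m^{p\to q},(\mathbf{l_s'},\mathbf{l}))$ for all $\mathbf{l}\in L_{\mathcal{S}}$, and, for every global transition $(\mathbf{l_r},\mathrm{rec}(p,q,m),\mathbf{l_r'})\in\delta_{\mathcal{S}}$,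 a transition $((\mathbf{l_s},\mathbf{l_r}),!?m^{p\to q},(\mathbf{l_s'},\mathbf{l_r'}))$. $\mathcal{L}(\cdot)$ denotes its language. *)

theory Defs
  imports Main
begin

datatype ('p, 'm) action = Send 'p 'p 'm | Rec 'p 'p 'm

fun proc :: "('p, 'm) action \<Rightarrow> 'p" where
  "proc (Send p q m) = p"
| "proc (Rec p q m) = q"

record ('p, 'm, 's) system =
  lstates :: "'p \<Rightarrow> 's set"
  ltrans  :: "'p \<Rightarrow> ('s \<times> ('p, 'm) action \<times> 's) set"
  linit   :: "'p \<Rightarrow> 's"

definition comm_system :: "('p::finite, 'm::finite, 's) system \<Rightarrow> bool" where
  "comm_system S \<longleftrightarrow>
     (\<forall>p. finite (lstates S p) \<and> linit S p \<in> lstates S p \<and>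
          (\<forall>s a s'. (s, a, s') \<in> ltrans S p \<longrightarrow>
              s \<in> lstates S p \<and> s' \<in> lstates S p \<and> proc a = p))"

definition gstates :: "('p, 'm, 's) system \<Rightarrow> ('p \<Rightarrow> 's) set" where
  "gstates S = {l. \<forall>p. l p \<in> lstates S p}"

definition gtrans :: "('p, 'm, 's) system \<Rightarrow> (('p \<Rightarrow> 's) \<times> ('p, 'm) action \<times> ('p \<Rightarrow> 's)) set" where
  "gtrans S = {(l, a, l'). l \<in> gstates S \<and> l' \<in> gstates S \<and>
                 (l (proc a), a, l' (proc a)) \<in> ltrans S (proc a) \<and>
                 (\<forall>r. r \<noteq> proc a \<longrightarrow> l' r = l r)}"

fun gsteps :: "('p, 'm, 's) system \<Rightarrow> ('p \<Rightarrow> 's) \<Rightarrow> ('p, 'm) action list \<Rightarrow> ('p \<Rightarrow> 's) \<Rightarrow> bool" where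
  "gsteps S l [] l' \<longleftrightarrow> l = l'"
| "gsteps S l (a # e) l' \<longleftrightarrow> (\<exists>l''. (l, a, l'') \<in> gtrans S \<and> gsteps S l'' e l')"

record ('p, 'm) msc =
  events :: "nat set"
  lab    :: "nat \<Rightarrow> ('p, 'm) action"
  po     :: "(nat \<times> nat) set"
  src    :: "(nat \<times> nat) set"

definition linearization :: "('p, 'm) msc \<Rightarrow> ('p, 'm) action list \<Rightarrow> bool" where
  "linearization \<mu> e \<longleftrightarrow>
     (\<exists>es. distinct es \<and> set es = events \<mu> \<and> e = map (lab \<mu>) es \<and>
        (\<forall>i j. i < length es \<longrightarrow> j < length es \<longrightarrow>
               (es ! i, es ! j) \<in> (po \<mu> \<union> src \<mu>)\<^sup>* \<longrightarrow> i \<le> j))"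

definition occ :: "('p, 'm) action list \<Rightarrow> nat \<Rightarrow> nat" where
  "occ e i = length (filter (\<lambda>b. b = e ! i) (take (Suc i) e))"

(* msc(e); events are the positions 0..<length e (position i carries a_{i+1}) *)
definition msc_of :: "('p, 'm) action list \<Rightarrow> ('p, 'm) msc" where
  "msc_of e = \<lparr> events = {..<length e},
                lab = (\<lambda>i. e ! i),
                po = {(i, j). i < j \<and> j < length e \<and> proc (e ! i) = proc (e ! j)},
                src = {(i, j). i < j \<and> j < length e \<and>
                          (\<exists>p q m. e ! i = Send p q m \<and> e ! j = Rec p q m) \<and>
                          occ e i = occ e j} \<rparr>"

definition msc_trans :: "('p, 'm, 's) system \<Rightarrow> ('p \<Rightarrow> 's) \<Rightarrow> ('p, 'm) msc \<Rightarrow> ('p \<Rightarrow> 's) \<Rightarrow> bool" where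
  "msc_trans S l \<mu> l' \<longleftrightarrow> (\<forall>e. linearization \<mu> e \<longrightarrow> gsteps S l e l')"

(* SR m p q = !?m^{p->q};  SO m p q = !m^{p->q} *)
datatype ('p, 'm) sym = SR 'm 'p 'p | SO 'm 'p 'p

fun sigma1 :: "('p, 'm) sym \<Rightarrow> ('p, 'm) action list" where
  "sigma1 (SR m p q) = [Send p q m]"
| "sigma1 (SO m p q) = [Send p q m]"

fun sigma2 :: "('p, 'm) sym \<Rightarrow> ('p, 'm) action list" where
  "sigma2 (SR m p q) = [Rec p q m]"
| "sigma2 (SO m p q) = []"

definition msc_word :: "('p, 'm) sym list \<Rightarrow> ('p, 'm) msc" where
  "msc_word w = msc_of (concat (map sigma1 w) @ concat (map sigma2 w))"

definition asr_trans :: "('p, 'm, 's) system \<Rightarrow>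
    ((('p \<Rightarrow> 's) \<times> ('p \<Rightarrow> 's)) \<times> ('p, 'm) sym \<times> (('p \<Rightarrow> 's) \<times> ('p \<Rightarrow> 's))) set" where
  "asr_trans S =
     {((ls, l), SO m p q, (ls', l)) | ls ls' l m p q.
         (ls, Send p q m, ls') \<in> gtrans S \<and> l \<in> gstates S}
   \<union> {((ls, lr), SR m p q, (ls', lr')) | ls ls' lr lr' m p q.
         (ls, Send p q m, ls') \<in> gtrans S \<and> (lr, Rec p q m, lr') \<in> gtrans S}"

fun nfa_run :: "('q \<times> 'a \<times> 'q) set \<Rightarrow> 'q \<Rightarrow> 'a list \<Rightarrow> 'q \<Rightarrow> bool" where
  "nfa_run \<delta> s [] s' \<longleftrightarrow> s = s'"
| "nfa_run \<delta> s (a # w) s' \<longleftrightarrow> (\<exists>s''. (s, a, s'') \<in> \<delta> \<and> nfa_run \<delta> s'' w s')"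

definition asr_lang :: "('p, 'm, 's) system \<Rightarrow> ('p \<Rightarrow> 's) \<Rightarrow> ('p \<Rightarrow> 's) \<Rightarrow> ('p \<Rightarrow> 's)
    \<Rightarrow> ('p, 'm) sym list set" where
  "asr_lang S lin lmid lfin = {w. nfa_run (asr_trans S) (lin, lmid) w (lmid, lfin)}"

end

theory Submission
  imports Defs
begin

text \<open>The automaton \<open>A_SR\<close> runs two copies of the global automaton side by side: the first
  reads the sends \<open>\<sigma>\<^sub>1(w)\<close> from \<open>l_in\<close> to \<open>l_mid\<close>, the second the receives \<open>\<sigma>\<^sub>2(w)\<close> from
  \<open>l_mid\<close> to \<open>l_fin\<close>. So \<open>w\<close> is accepted for some \<open>l_mid\<close> iff the global automaton goes from
  \<open>l_in\<close> to \<open>l_fin\<close> on \<open>\<sigma>\<^sub>1(w) \<sigma>\<^sub>2(w)\<close>. Since the asynchronous product has no buffers, whether it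
  goes from \<open>l\<close> to \<open>l'\<close> on \<open>e\<close> depends only on the projections of \<open>e\<close> to the processes, and
  these are the same for all linearizations of \<open>msc(e)\<close>, one of which is \<open>e\<close> itself.\<close>

abbreviation proj :: "'p \<Rightarrow> ('p, 'm) action list \<Rightarrow> ('p, 'm) action list" where
  "proj p e \<equiv> filter (\<lambda>a. proc a = p) e"

lemma nfa_run_append:
  "nfa_run \<delta> s (u @ v) s' \<longleftrightarrow> (\<exists>s''. nfa_run \<delta> s u s'' \<and> nfa_run \<delta> s'' v s')"
  by (induction u arbitrary: s) auto

lemma gsteps_eq_nfa_run: "gsteps S = nfa_run (gtrans S)"
proof (intro ext)
  show "gsteps S l e l' = nfa_run (gtrans S) l e l'" for l e l'
    by (induction e arbitrary: l) auto
qed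

lemma gsteps_append:
  "gsteps S l (u @ v) l' \<longleftrightarrow> (\<exists>l''. gsteps S l u l'' \<and> gsteps S l'' v l')"
  by (simp add: gsteps_eq_nfa_run nfa_run_append)

lemma gsteps_gstates:
  assumes "l \<in> gstates S" and "gsteps S l e l'"
  shows "l' \<in> gstates S"
  using assms by (induction e arbitrary: l) (auto simp: gtrans_def)

lemma gsteps_imp_local_runs:
  assumes "gsteps S l e l'"
  shows "nfa_run (ltrans S p) (l p) (proj p e) (l' p)"
  using assms
proof (induction e arbitrary: l)
  case Nil
  then show ?case by simp
next
  case (Cons a e)
  then obtain l'' where step: "(l, a, l'') \<in> gtrans S" and rest: "gsteps S l'' e l'"
    by auto
  have IH: "nfa_run (ltrans S p) (l'' p) (proj p e) (l' p)"
    using Cons.IH[OF rest] .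
  show ?case
  proof (cases "proc a = p")
    case True
    then show ?thesis using step IH by (auto simp: gtrans_def)
  next
    case False
    then have "l'' p = l p" using step by (simp add: gtrans_def)
    then show ?thesis using False IH by simp
  qed
qed

lemma local_runs_imp_gsteps:
  assumes S: "comm_system S" and l: "l \<in> gstates S" and l': "l' \<in> gstates S"
    and runs: "\<And>p. nfa_run (ltrans S p) (l p) (proj p e) (l' p)"
  shows "gsteps S l e l'"
  using l runs
proof (induction e arbitrary: l)
  case Nil
  then show ?case by (simp add: fun_eq_iff)
next
  case (Cons a e)
  obtain s where s: "(l (proc a), a, s) \<in> ltrans S (proc a)"
    and run_a: "nfa_run (ltrans S (proc a)) s (proj (proc a) e) (l' (proc a))"
    using Cons.prems(2)[of "proc a"] by auto
  define l'' where "l'' = l(proc a := s)"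
  have "s \<in> lstates S (proc a)"
    using S s unfolding comm_system_def by blast
  then have l'': "l'' \<in> gstates S"
    using Cons.prems(1) by (auto simp: gstates_def l''_def)
  have step: "(l, a, l'') \<in> gtrans S"
    using Cons.prems(1) l'' s by (auto simp: gtrans_def l''_def)
  have "nfa_run (ltrans S p) (l'' p) (proj p e) (l' p)" for p
    using run_a Cons.prems(2)[of p] by (cases "proc a = p") (auto simp: l''_def)
  then have "gsteps S l'' e l'"
    using Cons.IH[OF l''] by blast
  then show ?case using step by auto
qed

lemma gsteps_iff_local_runs:
  assumes "comm_system S" and "l \<in> gstates S"
  shows "gsteps S l e l' \<longleftrightarrow>
           l' \<in> gstates S \<and> (\<forall>p. nfa_run (ltrans S p) (l p) (proj p e) (l' p))"
  using assms gsteps_gstates gsteps_imp_local_runs local_runs_imp_gsteps by metis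

lemma gsteps_cong_proj:
  assumes "comm_system S" and "l \<in> gstates S" and "\<And>p. proj p e = proj p e'"
  shows "gsteps S l e l' \<longleftrightarrow> gsteps S l e' l'"
  using assms by (simp add: gsteps_iff_local_runs)

lemma filter_permutation_eq_filter_upt:
  assumes "distinct xs" and "set xs = {..<n}"
    and ordered: "\<And>i j. i < j \<Longrightarrow> j < length xs \<Longrightarrow> P (xs ! i) \<Longrightarrow> P (xs ! j) \<Longrightarrow> xs ! i < xs ! j"
  shows "filter P xs = filter P [0..<n]"
proof -
  have "sorted_wrt (\<lambda>x y. P x \<longrightarrow> P y \<longrightarrow> x < y) xs"
    using ordered by (simp add: sorted_wrt_iff_nth_less)
  then have "sorted_wrt (\<lambda>x y. P x \<longrightarrow> P y \<longrightarrow> x < y) (filter P xs)"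
    by (rule sorted_wrt_filter)
  then have "sorted_wrt (<) (filter P xs)"
    by (rule sorted_wrt_mono_rel[rotated]) auto
  moreover have "sorted_wrt (<) (filter P [0..<n])"
    by (rule sorted_wrt_filter) simp
  moreover have "set (filter P xs) = set (filter P [0..<n])"
    using assms(2) by auto
  ultimately show ?thesis
    unfolding strict_sorted_iff by (blast intro: sorted_distinct_set_unique)
qed

lemma linearization_msc_of_proj:
  assumes "linearization (msc_of e) e'"
  shows "proj p e' = proj p e"
proof -
  obtain es where distinct: "distinct es" and events: "set es = {..<length e}"
    and e': "e' = map (nth e) es"
    and ordered: "\<And>i j. i < length es \<Longrightarrow> j < length es \<Longrightarrow>
               (es ! i, es ! j) \<in> (po (msc_of e) \<union> src (msc_of e))\<^sup>* \<Longrightarrow> i \<le> j"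
    using assms unfolding linearization_def by (auto simp: msc_of_def)
  have "es ! i < es ! j"
    if ij: "i < j" "j < length es" and "proc (e ! (es ! i)) = p" "proc (e ! (es ! j)) = p" for i j
  proof (rule ccontr)
    assume "\<not> es ! i < es ! j"
    moreover have "es ! i \<noteq> es ! j"
      using distinct ij by (simp add: nth_eq_iff_index_eq)
    moreover have "es ! i < length e"
      using events ij by (metis lessThan_iff nth_mem order.strict_trans)
    ultimately have "(es ! j, es ! i) \<in> po (msc_of e)"
      using that by (simp add: msc_of_def)
    then have "j \<le> i"
      using ordered ij by (meson UnI1 order.strict_trans r_into_rtrancl)
    then show False using ij by simp
  qed
  then have "filter (\<lambda>i. proc (e ! i) = p) es = filter (\<lambda>i. proc (e ! i) = p) [0..<length e]"
    using distinct events by (intro filter_permutation_eq_filter_upt) auto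
  then have "proj p (map (nth e) es) = proj p (map (nth e) [0..<length e])"
    by (simp add: filter_map o_def)
  then show ?thesis by (simp add: e' map_nth)
qed

lemma linearization_msc_of_self: "linearization (msc_of e) e"
proof -
  have forward: "po (msc_of e) \<union> src (msc_of e) \<subseteq> {(i, j). i \<le> j}"
    by (auto simp: msc_of_def)
  have "(i, j) \<in> (po (msc_of e) \<union> src (msc_of e))\<^sup>* \<Longrightarrow> i \<le> j" for i j
    by (induction rule: rtrancl_induct) (use forward in auto)
  then show ?thesis
    unfolding linearization_def
    by (intro exI[of _ "[0..<length e]"]) (auto simp: msc_of_def map_nth)
qed

lemma msc_trans_msc_of_iff:
  assumes "comm_system S" and "l \<in> gstates S"
  shows "msc_trans S l (msc_of e) l' \<longleftrightarrow> gsteps S l e l'"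
  using assms linearization_msc_of_self linearization_msc_of_proj gsteps_cong_proj
  unfolding msc_trans_def by metis

lemma asr_run_iff:
  assumes "b \<in> gstates S"
  shows "nfa_run (asr_trans S) (a, b) w (c, d) \<longleftrightarrow>
           gsteps S a (concat (map sigma1 w)) c \<and> gsteps S b (concat (map sigma2 w)) d"
  using assms
proof (induction w arbitrary: a b)
  case Nil
  then show ?case by auto
next
  case (Cons x w)
  show ?case
  proof (cases x)
    case (SR m p q)
    have "nfa_run (asr_trans S) (a, b) (x # w) (c, d) \<longleftrightarrow>
      (\<exists>a' b'. (a, Send p q m, a') \<in> gtrans S \<and> (b, Rec p q m, b') \<in> gtrans S \<and>
         nfa_run (asr_trans S) (a', b') w (c, d))"
      by (auto simp: SR asr_trans_def)
    also have "\<dots> \<longleftrightarrow> (\<exists>a' b'. (a, Send p q m, a') \<in> gtrans S \<and> (b, Rec p q m, b') \<in> gtrans S \<and>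
         gsteps S a' (concat (map sigma1 w)) c \<and> gsteps S b' (concat (map sigma2 w)) d)"
      using Cons.IH by (auto simp: gtrans_def)
    finally show ?thesis by (auto simp: SR)
  next
    case (SO m p q)
    have "nfa_run (asr_trans S) (a, b) (x # w) (c, d) \<longleftrightarrow>
      (\<exists>a'. (a, Send p q m, a') \<in> gtrans S \<and> nfa_run (asr_trans S) (a', b) w (c, d))"
      using Cons.prems by (auto simp: SO asr_trans_def)
    also have "\<dots> \<longleftrightarrow> (\<exists>a'. (a, Send p q m, a') \<in> gtrans S \<and>
         gsteps S a' (concat (map sigma1 w)) c \<and> gsteps S b (concat (map sigma2 w)) d)"
      using Cons.IH Cons.prems by auto
    finally show ?thesis by (auto simp: SO)
  qed
qed

theorem lemma3:
  fixes S :: "('p::finite, 'm::finite, 's) system"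
    and lin lfin :: "'p \<Rightarrow> 's"
    and w :: "('p, 'm) sym list"
  assumes "comm_system S"
    and "lin \<in> gstates S"
    and "lfin \<in> gstates S"
  shows "(\<exists>lmid \<in> gstates S. w \<in> asr_lang S lin lmid lfin) \<longleftrightarrow>
         msc_trans S lin (msc_word w) lfin"
proof -
  let ?sends = "concat (map sigma1 w)" and ?recs = "concat (map sigma2 w)"
  have "(\<exists>lmid \<in> gstates S. w \<in> asr_lang S lin lmid lfin) \<longleftrightarrow>
        (\<exists>lmid \<in> gstates S. gsteps S lin ?sends lmid \<and> gsteps S lmid ?recs lfin)"
    by (auto simp: asr_lang_def asr_run_iff)
  also have "\<dots> \<longleftrightarrow> gsteps S lin (?sends @ ?recs) lfin"
    using gsteps_gstates[OF assms(2)] by (auto simp: gsteps_append)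
  also have "\<dots> \<longleftrightarrow> msc_trans S lin (msc_word w) lfin"
    unfolding msc_word_def using assms(1,2) by (simp add: msc_trans_msc_of_iff)
  finally show ?thesis .
qed

end
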